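(* In the discrete torus model with frame group $\mathbb{Z}_2\times\mathbb{Z}_2$ and its universal calculus (context), the torsion-free and cotorsion-free spin connections are exactly \[A_{\overline{10}}=\alpha e_1-(\delta+\tfrac{s_2}{2})e_2,\quad A_{\overline{01}}=-(\gamma+\tfrac{s_1}{2})e_1+\beta e_2,\quad A_{\overline{11}}=\gamma e_1+\delta e_2\] for arbitrary functions $\alpha,\beta,\gamma,\delta$, where $s_1=\bar\partial^2\Theta_1$, $s_2=\bar\partial^1\Theta_2$. With $a=\alpha+\gamma$, $b=\beta+\delta$ the covariant derivative is $\nabla e_1=2a\,e_1\otimes e_1-s_2\,e_2\otimes e_1$, $\nabla e_2=-s_1\,e_1\otimes e_2+2b\,e_2\otimes e_2$.
   Context: Discrete torus model: $\Sigma=\mathbb{Z}_2\times\mathbb{Z}_2$, $x\to y$ iff $y-x\in\{(1,0),(0,1)\}$; diagonal zweibein $e_{1,x,x+(1,0)}=\Theta_1(x)^{-1}$, $e_{2,x,x+(0,1)}=\Theta_2(x)^{-1}$, $\Theta_a$ nowhere-vanishing with $\Theta_1R_1\Theta_2=\Theta_2R_2\Theta_1$; $R_1f(x)=f(x+(1,0))$, $R_2f(x)=f(x+(0,1))$, $\bar\partial^a=R_a-\mathrm{id}$; $e_af=R_a(f)e_a$, $\mathrm{d}f=\sum_a(\bar\partial^af)\Theta_ae_a$; two-forms $e_1\wedge e_2=-e_2\wedge e_1$, $e_a\wedge e_a=0$; $\mathrm{d}e_1=(\bar\partial^1\Theta_2)e_1\wedge e_2$, $\mathrm{d}e_2=-(\bar\partial^2\Theta_1)e_1\wedge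 e_2$. Frame group $\mathbb{Z}_2\times\mathbb{Z}_2=\{\overline{00},\overline{10},\overline{01},\overline{11}\}$ with universal calculus $\mathcal C=\{\overline{10},\overline{01},\overline{11}\}$, $f^i=i-\overline{00}$ acting by $f^{\overline{10}}\triangleright e_1=-2e_1$, $f^{\overline{10}}\triangleright e_2=0$, $f^{\overline{01}}\triangleright e_1=0$, $f^{\overline{01}}\triangleright e_2=-2e_2$, $f^{\overline{11}}\triangleright e_a=-2e_a$. Spin connection: 1-forms $A_i$, $i\in\mathcal C$. Torsion-free: $\mathrm{d}e_a+\sum_iA_i\wedge(f^i\triangleright e_a)=0$; cotorsion-free: $\mathrm{d}e_a+\sum_i(f^i\triangleright e_a)\wedge A_i=0$ (all elements have order 2). Covariant derivative $\nabla(\sum\alpha^ae_a)=\sum\mathrm{d}\alpha^a\otimes e_a-\sum_{i,a}\alpha^aA_i\otimes f^i\triangleright e_a$. *)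

theory Defs
  imports Complex_Main "HOL-Library.Function_Algebras"
begin

text \<open>Discrete torus model.  Points of Sigma = Z2 x Z2 are encoded as pairs of booleans
(Z2 = bool with addition = exclusive or); the point (1,0) is (True,False).
Functions on Sigma are real-valued.\<close>

type_synonym pt = "bool \<times> bool"
type_synonym fn = "pt \<Rightarrow> real"

datatype ix = E1 | E2

fun shift :: "ix \<Rightarrow> fn \<Rightarrow> fn" where
  "shift E1 f = (\<lambda>(x, y). f (\<not> x, y))"
| "shift E2 f = (\<lambda>(x, y). f (x, \<not> y))"

definition dbar :: "ix \<Rightarrow> fn \<Rightarrow> fn" where
  "dbar a f = (\<lambda>p. shift a f p - f p)"

text \<open>One-forms, written uniquely as \<open>\<Sum>_a \<omega>^a e_a\<close> with left coefficients \<open>\<omega> a\<close>.\<close>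
type_synonym form1 = "ix \<Rightarrow> fn"
text \<open>Two-forms \<open>c e_1\<and>e_2\<close>, represented by the coefficient c.\<close>
type_synonym form2 = fn
text \<open>Elements of \<open>\<Omega>^1 \<otimes>_A \<Omega>^1\<close>, \<open>\<Sum>_{b,c} T^{bc} e_b \<otimes> e_c\<close>, with left coefficients.\<close>
type_synonym tensor = "ix \<Rightarrow> ix \<Rightarrow> fn"

definition basis :: "ix \<Rightarrow> form1" where
  "basis a = (\<lambda>b p. if b = a then 1 else 0)"

definition lmul :: "fn \<Rightarrow> form1 \<Rightarrow> form1" where
  "lmul f \<omega> = (\<lambda>b p. f p * \<omega> b p)"

definition tlmul :: "fn \<Rightarrow> tensor \<Rightarrow> tensor" where
  "tlmul f T = (\<lambda>b c p. f p * T b c p)"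

definition dfun :: "(ix \<Rightarrow> fn) \<Rightarrow> fn \<Rightarrow> form1" where
  "dfun \<Theta> f = (\<lambda>a p. dbar a f p * \<Theta> a p)"

fun de :: "(ix \<Rightarrow> fn) \<Rightarrow> ix \<Rightarrow> form2" where
  "de \<Theta> E1 = dbar E1 (\<Theta> E2)"
| "de \<Theta> E2 = (\<lambda>p. - dbar E2 (\<Theta> E1) p)"

text \<open>Wedge product of one-forms, using the bimodule relation \<open>e_a f = R_a(f) e_a\<close>,
  \<open>e_a\<and>e_a = 0\<close>, \<open>e_2\<and>e_1 = - e_1\<and>e_2\<close>.\<close>
definition wedge :: "form1 \<Rightarrow> form1 \<Rightarrow> form2" where
  "wedge \<omega> \<eta> = (\<lambda>p. \<omega> E1 p * shift E1 (\<eta> E2) p - \<omega> E2 p * shift E2 (\<eta> E1) p)"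

text \<open>Tensor product over the algebra: \<open>(\<omega>^b e_b) \<otimes> (\<eta>^c e_c) = \<omega>^b R_b(\<eta>^c) e_b \<otimes> e_c\<close>.\<close>
definition tens :: "form1 \<Rightarrow> form1 \<Rightarrow> tensor" where
  "tens \<omega> \<eta> = (\<lambda>b c p. \<omega> b p * shift b (\<eta> c) p)"

datatype frame = G00 | G10 | G01 | G11

definition calC :: "frame set" where
  "calC = {G10, G01, G11}"

text \<open>Action of \<open>f^i = i - 00\<close> on the zweibein: \<open>f^i \<triangleright> e_a = fcoef i a \<cdot> e_a\<close>.\<close>
fun fcoef :: "frame \<Rightarrow> ix \<Rightarrow> real" where
  "fcoef G10 E1 = -2" | "fcoef G10 E2 = 0"
| "fcoef G01 E1 = 0"  | "fcoef G01 E2 = -2"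
| "fcoef G11 E1 = -2" | "fcoef G11 E2 = -2"
| "fcoef G00 _ = 0"

definition act :: "frame \<Rightarrow> form1 \<Rightarrow> form1" where
  "act i \<omega> = (\<lambda>a p. fcoef i a * \<omega> a p)"

text \<open>A spin connection is a family of one-forms \<open>A_i\<close>, \<open>i \<in> C\<close>
  (the value at G00 is irrelevant and never used).\<close>
type_synonym spinconn = "frame \<Rightarrow> form1"

definition torsion_free :: "(ix \<Rightarrow> fn) \<Rightarrow> spinconn \<Rightarrow> bool" where
  "torsion_free \<Theta> A \<longleftrightarrow>
     (\<forall>a. de \<Theta> a + (\<Sum>i\<in>calC. wedge (A i) (act i (basis a))) = 0)"

definition cotorsion_free :: "(ix \<Rightarrow> fn) \<Rightarrow> spinconn \<Rightarrow> bool" where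
  "cotorsion_free \<Theta> A \<longleftrightarrow>
     (\<forall>a. de \<Theta> a + (\<Sum>i\<in>calC. wedge (act i (basis a)) (A i)) = 0)"

definition nabla :: "(ix \<Rightarrow> fn) \<Rightarrow> spinconn \<Rightarrow> form1 \<Rightarrow> tensor" where
  "nabla \<Theta> A \<omega> =
     (\<Sum>a\<in>{E1, E2}. tens (dfun \<Theta> (\<omega> a)) (basis a))
     - (\<Sum>i\<in>calC. \<Sum>a\<in>{E1, E2}. tens (lmul (\<omega> a) (A i)) (act i (basis a)))"

end

(*
  On Z2 x Z2 each shift R_a is an involution, so dbar^a f changes sign under R_a.
  Torsion-freeness consists of two pointwise linear equations fixing
  A_10^2 + A_11^2 = -s_2/2 and A_01^1 + A_11^1 = -s_1/2; cotorsion-freeness is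
  the same pair of equations with R_a applied to the left-hand sides, and applying
  R_a once more turns it into torsion-freeness.  The four remaining components of
  the A_i are free.  Since e_a has constant coefficients, nabla e_a reduces to
  -sum_i A_i (x) f^i |> e_a, which is read off from the parametrisation.
*)
theory Submission
  imports Defs
begin

lemma ix_all: "(\<forall>a. P a) \<longleftrightarrow> P E1 \<and> P E2"
  by (metis (full_types) ix.exhaust)

lemma form1_eq_iff: "\<omega> = \<eta> \<longleftrightarrow> \<omega> E1 = \<eta> E1 \<and> \<omega> E2 = \<eta> E2" for \<omega> \<eta> :: form1
  by (auto simp: fun_eq_iff ix_all)

lemma shift_shift [simp]: "shift a (shift a f) = f"
  by (cases a) (auto simp: fun_eq_iff)

lemma shift_const [simp]: "shift a (\<lambda>_. c) = (\<lambda>_. c)"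
  by (cases a) (simp_all add: fun_eq_iff split_beta)

lemma shift_eq_iff: "shift a f = g \<longleftrightarrow> f = shift a g"
  by (metis shift_shift)

lemma shift_dbar: "shift a (dbar a f) = (\<lambda>p. - dbar a f p)"
  by (cases a) (auto simp: fun_eq_iff dbar_def)

lemma shift_divide: "shift a (\<lambda>p. f p / c) = (\<lambda>p. shift a f p / c)"
  by (cases a) (auto simp: fun_eq_iff)

lemma sum_calC: "(\<Sum>i\<in>calC. f i) = f G10 + f G01 + f G11"
  by (simp add: calC_def add.assoc)

lemma torsion_coeff_E1:
  "de \<Theta> E1 + (\<Sum>i\<in>calC. wedge (A i) (act i (basis E1)))
     = (\<lambda>p. dbar E1 (\<Theta> E2) p + 2 * (A G10 E2 p + A G11 E2 p))"
  by (simp add: sum_calC fun_eq_iff wedge_def act_def basis_def)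

lemma torsion_coeff_E2:
  "de \<Theta> E2 + (\<Sum>i\<in>calC. wedge (A i) (act i (basis E2)))
     = (\<lambda>p. - dbar E2 (\<Theta> E1) p - 2 * (A G01 E1 p + A G11 E1 p))"
  by (simp add: sum_calC fun_eq_iff wedge_def act_def basis_def)

lemma cotorsion_coeff_E1:
  "de \<Theta> E1 + (\<Sum>i\<in>calC. wedge (act i (basis E1)) (A i))
     = (\<lambda>p. dbar E1 (\<Theta> E2) p - 2 * shift E1 (\<lambda>q. A G10 E2 q + A G11 E2 q) p)"
  by (simp add: sum_calC fun_eq_iff wedge_def act_def basis_def split_beta)

lemma cotorsion_coeff_E2:
  "de \<Theta> E2 + (\<Sum>i\<in>calC. wedge (act i (basis E2)) (A i))
     = (\<lambda>p. - dbar E2 (\<Theta> E1) p + 2 * shift E2 (\<lambda>q. A G01 E1 q + A G11 E1 q) p)"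
  by (simp add: sum_calC fun_eq_iff wedge_def act_def basis_def split_beta)

lemma torsion_free_iff:
  "torsion_free \<Theta> A \<longleftrightarrow>
     (\<lambda>p. A G10 E2 p + A G11 E2 p) = (\<lambda>p. - dbar E1 (\<Theta> E2) p / 2) \<and>
     (\<lambda>p. A G01 E1 p + A G11 E1 p) = (\<lambda>p. - dbar E2 (\<Theta> E1) p / 2)"
  unfolding torsion_free_def ix_all torsion_coeff_E1 torsion_coeff_E2 fun_eq_iff zero_fun_apply
  by (intro conj_cong all_cong1) auto

lemma cotorsion_free_iff:
  "cotorsion_free \<Theta> A \<longleftrightarrow>
     shift E1 (\<lambda>p. A G10 E2 p + A G11 E2 p) = (\<lambda>p. dbar E1 (\<Theta> E2) p / 2) \<and>
     shift E2 (\<lambda>p. A G01 E1 p + A G11 E1 p) = (\<lambda>p. dbar E2 (\<Theta> E1) p / 2)"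
  unfolding cotorsion_free_def ix_all cotorsion_coeff_E1 cotorsion_coeff_E2 fun_eq_iff zero_fun_apply
  by (intro conj_cong all_cong1) linarith+

lemma cotorsion_free_iff_torsion_free: "cotorsion_free \<Theta> A \<longleftrightarrow> torsion_free \<Theta> A"
  unfolding cotorsion_free_iff torsion_free_iff shift_eq_iff
  by (simp add: shift_dbar shift_divide)

lemma lmul_basis: "lmul f (basis a) = (\<lambda>b p. if b = a then f p else 0)"
  by (simp add: lmul_def basis_def fun_eq_iff)

lemma torsion_free_iff_explicit:
  "torsion_free \<Theta> A \<longleftrightarrow> (\<exists>\<alpha> \<beta> \<gamma> \<delta>.
     A G10 = lmul \<alpha> (basis E1) - lmul (\<lambda>p. \<delta> p + dbar E1 (\<Theta> E2) p / 2) (basis E2) \<and>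
     A G01 = lmul \<beta> (basis E2) - lmul (\<lambda>p. \<gamma> p + dbar E2 (\<Theta> E1) p / 2) (basis E1) \<and>
     A G11 = lmul \<gamma> (basis E1) + lmul \<delta> (basis E2))"
  (is "_ \<longleftrightarrow> (\<exists>\<alpha> \<beta> \<gamma> \<delta>. ?explicit \<alpha> \<beta> \<gamma> \<delta>)")
proof
  assume "torsion_free \<Theta> A"
  then have tf1: "(\<lambda>p. A G10 E2 p + A G11 E2 p) = (\<lambda>p. - dbar E1 (\<Theta> E2) p / 2)"
    and tf2: "(\<lambda>p. A G01 E1 p + A G11 E1 p) = (\<lambda>p. - dbar E2 (\<Theta> E1) p / 2)"
    unfolding torsion_free_iff by blast+
  have "A G10 E2 p = - (A G11 E2 p + dbar E1 (\<Theta> E2) p / 2)"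
    and "A G01 E1 p = - (A G11 E1 p + dbar E2 (\<Theta> E1) p / 2)" for p
    using fun_cong[OF tf1, of p] fun_cong[OF tf2, of p] by simp_all
  then have "?explicit (A G10 E1) (A G01 E2) (A G11 E1) (A G11 E2)"
    by (simp add: form1_eq_iff lmul_basis fun_eq_iff)
  then show "\<exists>\<alpha> \<beta> \<gamma> \<delta>. ?explicit \<alpha> \<beta> \<gamma> \<delta>"
    by blast
next
  assume "\<exists>\<alpha> \<beta> \<gamma> \<delta>. ?explicit \<alpha> \<beta> \<gamma> \<delta>"
  then show "torsion_free \<Theta> A"
    unfolding torsion_free_iff by (auto simp: lmul_basis fun_eq_iff)
qed

lemma tens_act_basis:
  "tens \<omega> (act i (basis a)) = (\<lambda>b c p. if c = a then fcoef i a * \<omega> b p else 0)"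
  by (simp add: tens_def act_def basis_def fun_eq_iff)

lemma nabla_basis: "nabla \<Theta> A (basis a) = - (\<Sum>i\<in>calC. tens (A i) (act i (basis a)))"
  by (cases a)
    (simp_all add: nabla_def sum_calC basis_def dfun_def dbar_def tens_def lmul_def act_def fun_eq_iff)

lemma tlmul_tens_basis:
  "tlmul f (tens (basis a) (basis b)) = (\<lambda>a' b' p. if a' = a \<and> b' = b then f p else 0)"
  by (simp add: tlmul_def tens_def basis_def fun_eq_iff)

theorem proposition4p8:
  fixes \<Theta> :: "ix \<Rightarrow> pt \<Rightarrow> real"
  assumes nonvanish: "\<forall>a p. \<Theta> a p \<noteq> 0"
    and compat: "\<forall>p. \<Theta> E1 p * shift E1 (\<Theta> E2) p = \<Theta> E2 p * shift E2 (\<Theta> E1) p"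
  defines "s1 \<equiv> dbar E2 (\<Theta> E1)" and "s2 \<equiv> dbar E1 (\<Theta> E2)"
  shows "(\<forall>A :: spinconn.
           (torsion_free \<Theta> A \<and> cotorsion_free \<Theta> A) \<longleftrightarrow>
           (\<exists>\<alpha> \<beta> \<gamma> \<delta> :: pt \<Rightarrow> real.
              A G10 = lmul \<alpha> (basis E1) - lmul (\<lambda>p. \<delta> p + s2 p / 2) (basis E2) \<and>
              A G01 = lmul \<beta> (basis E2) - lmul (\<lambda>p. \<gamma> p + s1 p / 2) (basis E1) \<and>
              A G11 = lmul \<gamma> (basis E1) + lmul \<delta> (basis E2))) \<and>
         (\<forall>(A :: spinconn) (\<alpha> :: pt \<Rightarrow> real) \<beta> \<gamma> \<delta>.
           A G10 = lmul \<alpha> (basis E1) - lmul (\<lambda>p. \<delta> p + s2 p / 2) (basis E2) \<and>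
           A G01 = lmul \<beta> (basis E2) - lmul (\<lambda>p. \<gamma> p + s1 p / 2) (basis E1) \<and>
           A G11 = lmul \<gamma> (basis E1) + lmul \<delta> (basis E2)
           \<longrightarrow>
           nabla \<Theta> A (basis E1) =
             tlmul (\<lambda>p. 2 * (\<alpha> p + \<gamma> p)) (tens (basis E1) (basis E1))
             - tlmul s2 (tens (basis E2) (basis E1)) \<and>
           nabla \<Theta> A (basis E2) =
             - tlmul s1 (tens (basis E1) (basis E2))
             + tlmul (\<lambda>p. 2 * (\<beta> p + \<delta> p)) (tens (basis E2) (basis E2)))"
proof (intro conjI allI impI)
  fix A :: spinconn
  show "(torsion_free \<Theta> A \<and> cotorsion_free \<Theta> A) \<longleftrightarrow>
    (\<exists>\<alpha> \<beta> \<gamma> \<delta> :: pt \<Rightarrow> real.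
       A G10 = lmul \<alpha> (basis E1) - lmul (\<lambda>p. \<delta> p + s2 p / 2) (basis E2) \<and>
       A G01 = lmul \<beta> (basis E2) - lmul (\<lambda>p. \<gamma> p + s1 p / 2) (basis E1) \<and>
       A G11 = lmul \<gamma> (basis E1) + lmul \<delta> (basis E2))"
    unfolding cotorsion_free_iff_torsion_free torsion_free_iff_explicit s1_def s2_def by simp
next
  fix A :: spinconn and \<alpha> \<beta> \<gamma> \<delta> :: "pt \<Rightarrow> real"
  assume "A G10 = lmul \<alpha> (basis E1) - lmul (\<lambda>p. \<delta> p + s2 p / 2) (basis E2) \<and>
    A G01 = lmul \<beta> (basis E2) - lmul (\<lambda>p. \<gamma> p + s1 p / 2) (basis E1) \<and>
    A G11 = lmul \<gamma> (basis E1) + lmul \<delta> (basis E2)"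
  then show "nabla \<Theta> A (basis E1) =
      tlmul (\<lambda>p. 2 * (\<alpha> p + \<gamma> p)) (tens (basis E1) (basis E1))
      - tlmul s2 (tens (basis E2) (basis E1))"
    and "nabla \<Theta> A (basis E2) =
      - tlmul s1 (tens (basis E1) (basis E2))
      + tlmul (\<lambda>p. 2 * (\<beta> p + \<delta> p)) (tens (basis E2) (basis E2))"
    by (simp_all add: nabla_basis sum_calC tens_act_basis tlmul_tens_basis lmul_basis fun_eq_iff
        split: ix.split)
qed

end
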